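(* In the free group $\mathbb{F}_2$ on $a,b$, set $a_0:=b^{-1}$, $b_0:=aba^{-1}$ and recursively $a_n:=a_{n-1}b_{n-1}$, $b_n:=a_{n-1}^{-1}b_{n-1}^{-1}$ for $n\ge1$. For $w\in\mathbb{F}_2$ let $\gamma(w):=\max\{m\mid w\in\gamma_m(\mathbb{F}_2)\}$. Then $\gamma(a_n)=\gamma(b_n)$ for all $n\in\mathbb{N}$.
   Context: $\gamma_m(\mathbb{F}_2)$ denotes the $m$-th term of the lower central series: $\gamma_1(\mathbb{F}_2)=\mathbb{F}_2$, $\gamma_{m+1}(\mathbb{F}_2)=[\gamma_m(\mathbb{F}_2),\mathbb{F}_2]$. *)

theory Defs
  imports "HOL-Algebra.Algebra" "HOL-Library.Extended_Nat"
begin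

text \<open>A letter is a pair (g, e): g = False means generator a, g = True means b;
  e = True means the letter is the inverse of the generator.\<close>

type_synonym letter = "bool \<times> bool"

definition inv_letter :: "letter \<Rightarrow> letter" where
  "inv_letter l = (fst l, \<not> snd l)"

fun cons_red :: "letter \<Rightarrow> letter list \<Rightarrow> letter list" where
  "cons_red x [] = [x]"
| "cons_red x (y # ys) = (if y = inv_letter x then ys else x # y # ys)"

definition reduce :: "letter list \<Rightarrow> letter list" where
  "reduce xs = foldr cons_red xs []"

definition reduced :: "letter list \<Rightarrow> bool" where
  "reduced xs \<longleftrightarrow> (\<forall>i. Suc i < length xs \<longrightarrow> xs ! Suc i \<noteq> inv_letter (xs ! i))"

definition F2 :: "letter list monoid" where
  "F2 = \<lparr> carrier = {w. reduced w}, monoid.mult = (\<lambda>x y. reduce (x @ y)), one = [] \<rparr>"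

definition gen_a :: "letter list" where "gen_a = [(False, False)]"
definition gen_b :: "letter list" where "gen_b = [(True, False)]"

text \<open>Lower central series: lcs_aux k = gamma_(k+1)(F_2).\<close>
primrec lcs_aux :: "nat \<Rightarrow> letter list set" where
  "lcs_aux 0 = carrier F2"
| "lcs_aux (Suc k) = generate F2
     {x \<otimes>\<^bsub>F2\<^esub> y \<otimes>\<^bsub>F2\<^esub> inv\<^bsub>F2\<^esub> x \<otimes>\<^bsub>F2\<^esub> inv\<^bsub>F2\<^esub> y | x y. x \<in> lcs_aux k \<and> y \<in> carrier F2}"

definition lcs :: "nat \<Rightarrow> letter list set" where
  "lcs m = lcs_aux (m - 1)"

text \<open>gamma(w) = max {m \<ge> 1 | w \<in> gamma_m(F_2)}, taken as a supremum in enat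
  (it equals the maximum whenever the maximum exists, and is \<infinity> for w = 1).\<close>
definition gamma_deg :: "letter list \<Rightarrow> enat" where
  "gamma_deg w = Sup {enat m | m. 1 \<le> m \<and> w \<in> lcs m}"

fun ab_seq :: "nat \<Rightarrow> letter list \<times> letter list" where
  "ab_seq 0 = (inv\<^bsub>F2\<^esub> gen_b, gen_a \<otimes>\<^bsub>F2\<^esub> gen_b \<otimes>\<^bsub>F2\<^esub> inv\<^bsub>F2\<^esub> gen_a)"
| "ab_seq (Suc n) = (fst (ab_seq n) \<otimes>\<^bsub>F2\<^esub> snd (ab_seq n),
                     inv\<^bsub>F2\<^esub> (fst (ab_seq n)) \<otimes>\<^bsub>F2\<^esub> inv\<^bsub>F2\<^esub> (snd (ab_seq n)))"

definition a_seq :: "nat \<Rightarrow> letter list" where "a_seq n = fst (ab_seq n)"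
definition b_seq :: "nat \<Rightarrow> letter list" where "b_seq n = snd (ab_seq n)"

end

theory Submission
  imports Defs
begin

text \<open>For every \<open>n\<close>, \<open>b\<^sub>n\<close> is a conjugate of \<open>a\<^sub>n\<inverse>\<close>: indeed \<open>b\<^sub>0 = a a\<^sub>0\<inverse> a\<inverse>\<close> and
  \<open>b\<^sub>n\<^sub>+\<^sub>1 = a\<^sub>n\<inverse> a\<^sub>n\<^sub>+\<^sub>1\<inverse> a\<^sub>n\<close>. Every term of the lower central series is a normal subgroup,
  hence closed under inversion and conjugation, so \<open>a\<^sub>n\<close> and \<open>b\<^sub>n\<close> lie in exactly the same
  terms of the series.\<close>

fun reduced_rec :: "letter list \<Rightarrow> bool" where
  "reduced_rec [] = True"
| "reduced_rec [x] = True"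
| "reduced_rec (x # y # ys) = (y \<noteq> inv_letter x \<and> reduced_rec (y # ys))"

lemma reduced_Cons_Cons:
  "reduced (x # y # ys) \<longleftrightarrow> y \<noteq> inv_letter x \<and> reduced (y # ys)"
proof -
  have "(\<forall>i. Suc i < length (x # y # ys) \<longrightarrow> P i) \<longleftrightarrow>
        P 0 \<and> (\<forall>i. Suc i < length (y # ys) \<longrightarrow> P (Suc i))" for P
    by (auto simp: less_Suc_eq_0_disj)
  then show ?thesis
    unfolding reduced_def by simp
qed

lemma reduced_iff_reduced_rec: "reduced xs \<longleftrightarrow> reduced_rec xs"
proof (induction xs rule: reduced_rec.induct)
  case (3 x y ys)
  then show ?case by (simp add: reduced_Cons_Cons)
qed (simp_all add: reduced_def)

lemma inv_letter_inv_letter [simp]: "inv_letter (inv_letter x) = x"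
  by (simp add: inv_letter_def)

lemma reduced_rec_ConsD: "reduced_rec (x # ys) \<Longrightarrow> reduced_rec ys"
  by (cases ys) auto

lemma reduced_rec_cons_red: "reduced_rec ys \<Longrightarrow> reduced_rec (cons_red x ys)"
  by (cases ys) (auto dest: reduced_rec_ConsD)

lemma reduced_rec_foldr_cons_red: "reduced_rec acc \<Longrightarrow> reduced_rec (foldr cons_red xs acc)"
  by (induction xs) (auto intro: reduced_rec_cons_red)

lemma reduced_rec_reduce: "reduced_rec (reduce xs)"
  unfolding reduce_def by (rule reduced_rec_foldr_cons_red) simp

lemma reduce_reduced_rec: "reduced_rec w \<Longrightarrow> reduce w = w"
  unfolding reduce_def by (induction w rule: reduced_rec.induct) simp_all

lemma cons_red_inv_cancel: "reduced_rec acc \<Longrightarrow> cons_red x (cons_red (inv_letter x) acc) = acc"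
  by (cases acc rule: reduced_rec.cases) auto

lemma foldr_cons_red_cons_red:
  assumes "reduced_rec acc"
  shows "foldr cons_red (cons_red x ys) acc = cons_red x (foldr cons_red ys acc)"
proof (cases ys)
  case (Cons y zs)
  then show ?thesis
    using cons_red_inv_cancel[OF reduced_rec_foldr_cons_red[OF assms], of x zs] by auto
qed simp

text \<open>Reducing a word letter by letter from the right is an action of words on reduced
  words; this is where associativity of the multiplication of \<open>F2\<close> comes from.\<close>

lemma foldr_cons_red_foldr:
  "reduced_rec acc \<Longrightarrow>
    foldr cons_red (foldr cons_red xs ys) acc = foldr cons_red xs (foldr cons_red ys acc)"
  by (induction xs) (simp_all add: foldr_cons_red_cons_red)

lemma reduce_reduce_append: "reduce (reduce xs @ ys) = reduce (xs @ ys)"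
  unfolding reduce_def
  using foldr_cons_red_foldr[of "foldr cons_red ys []" xs "[]"] reduced_rec_foldr_cons_red[of "[]" ys]
  by simp

lemma reduce_append_reduce: "reduce (xs @ reduce ys) = reduce (xs @ ys)"
  unfolding reduce_def using foldr_cons_red_foldr[of "[]" ys "[]"] by simp

lemma foldr_cons_red_append_inverse:
  "reduced_rec acc \<Longrightarrow> foldr cons_red (xs @ rev (map inv_letter xs)) acc = acc"
proof (induction xs arbitrary: acc)
  case (Cons x xs)
  then show ?case
    by (simp add: reduced_rec_cons_red cons_red_inv_cancel)
qed simp

lemma reduce_inverse_append: "reduce (rev (map inv_letter w) @ w) = []"
  using foldr_cons_red_append_inverse[of "[]" "rev (map inv_letter w)"]
  by (simp add: reduce_def rev_map comp_def)

lemma F2_group: "group F2"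
proof (rule groupI)
  fix x y z
  assume "x \<in> carrier F2" "y \<in> carrier F2" "z \<in> carrier F2"
  show "x \<otimes>\<^bsub>F2\<^esub> y \<otimes>\<^bsub>F2\<^esub> z = x \<otimes>\<^bsub>F2\<^esub> (y \<otimes>\<^bsub>F2\<^esub> z)"
    by (simp add: F2_def reduce_reduce_append reduce_append_reduce)
next
  fix x
  assume x: "x \<in> carrier F2"
  show "\<one>\<^bsub>F2\<^esub> \<otimes>\<^bsub>F2\<^esub> x = x"
    using x by (simp add: F2_def reduced_iff_reduced_rec reduce_reduced_rec)
  show "\<exists>y\<in>carrier F2. y \<otimes>\<^bsub>F2\<^esub> x = \<one>\<^bsub>F2\<^esub>"
    by (rule bexI[of _ "reduce (rev (map inv_letter x))"])
       (simp_all add: F2_def reduced_iff_reduced_rec reduced_rec_reduce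
          reduce_reduce_append reduce_inverse_append)
qed (simp_all add: F2_def reduced_iff_reduced_rec reduced_rec_reduce)

interpretation F2: group F2
  by (rule F2_group)

lemma gen_a_carrier: "gen_a \<in> carrier F2"
  and gen_b_carrier: "gen_b \<in> carrier F2"
  by (simp_all add: F2_def reduced_iff_reduced_rec gen_a_def gen_b_def)

lemma (in group) conj_commutator:
  assumes "g \<in> carrier G" "x \<in> carrier G" "y \<in> carrier G"
  shows "g \<otimes> (x \<otimes> y \<otimes> inv x \<otimes> inv y) \<otimes> inv g =
    (g \<otimes> x \<otimes> inv g) \<otimes> (g \<otimes> y \<otimes> inv g) \<otimes> inv (g \<otimes> x \<otimes> inv g) \<otimes> inv (g \<otimes> y \<otimes> inv g)"
proof -
  have cancel: "inv g \<otimes> (g \<otimes> z) = z" if "z \<in> carrier G" for z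
    using assms that by (simp flip: m_assoc)
  show ?thesis
    using assms by (simp add: inv_mult_group m_assoc cancel)
qed

lemma (in group) commutator_subgroup_normal:
  assumes "N \<lhd> G"
  shows "generate G {x \<otimes> y \<otimes> inv x \<otimes> inv y | x y. x \<in> N \<and> y \<in> carrier G} \<lhd> G"
proof -
  interpret N: normal N G by (rule assms)
  show ?thesis
  proof (rule normal_generateI)
    show "{x \<otimes> y \<otimes> inv x \<otimes> inv y | x y. x \<in> N \<and> y \<in> carrier G} \<subseteq> carrier G"
      using N.subset by auto
  next
    fix h g
    assume "h \<in> {x \<otimes> y \<otimes> inv x \<otimes> inv y | x y. x \<in> N \<and> y \<in> carrier G}" and g: "g \<in> carrier G"
    then obtain x y where h: "h = x \<otimes> y \<otimes> inv x \<otimes> inv y" and x: "x \<in> N" and y: "y \<in> carrier G"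
      by blast
    have "g \<otimes> x \<otimes> inv g \<in> N" "g \<otimes> y \<otimes> inv g \<in> carrier G"
      using N.inv_op_closed2 g x y by auto
    then show "g \<otimes> h \<otimes> inv g \<in> {x \<otimes> y \<otimes> inv x \<otimes> inv y | x y. x \<in> N \<and> y \<in> carrier G}"
      using conj_commutator[OF g _ y, of x] x N.subset h by blast
  qed
qed

lemma (in normal) conj_inv_mem_iff:
  assumes "g \<in> carrier G" "w \<in> carrier G"
  shows "g \<otimes> inv w \<otimes> inv g \<in> H \<longleftrightarrow> w \<in> H"
proof
  assume "g \<otimes> inv w \<otimes> inv g \<in> H"
  then have "inv g \<otimes> (g \<otimes> inv w \<otimes> inv g) \<otimes> g \<in> H"
    using inv_op_closed1 assms by blast
  also have "inv g \<otimes> (g \<otimes> inv w \<otimes> inv g) \<otimes> g = inv w"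
    using assms by (simp add: m_assoc flip: m_assoc[of "inv g" g])
  finally show "w \<in> H"
    using assms by (metis inv_inv m_inv_closed)
qed (use assms inv_op_closed2 in auto)

lemma lcs_aux_normal: "lcs_aux k \<lhd> F2"
  by (induction k) (simp_all add: F2.normal_self F2.commutator_subgroup_normal)

lemma ab_seq_carrier: "fst (ab_seq n) \<in> carrier F2 \<and> snd (ab_seq n) \<in> carrier F2"
  by (induction n) (simp_all add: gen_a_carrier gen_b_carrier)

lemma b_seq_conj_inv_a_seq:
  "\<exists>g \<in> carrier F2. b_seq n = g \<otimes>\<^bsub>F2\<^esub> inv\<^bsub>F2\<^esub> (a_seq n) \<otimes>\<^bsub>F2\<^esub> inv\<^bsub>F2\<^esub> g"
proof (cases n)
  case 0
  show ?thesis
    using 0 gen_a_carrier gen_b_carrier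
    by (intro bexI[of _ gen_a]) (simp_all add: a_seq_def b_seq_def)
next
  case (Suc m)
  show ?thesis
    using Suc ab_seq_carrier[of m]
    by (intro bexI[of _ "inv\<^bsub>F2\<^esub> fst (ab_seq m)"])
       (simp_all add: a_seq_def b_seq_def F2.inv_mult_group F2.m_assoc)
qed

theorem corollary2p4:
  fixes n :: nat
  shows "gamma_deg (a_seq n) = gamma_deg (b_seq n)"
proof -
  obtain g where g: "g \<in> carrier F2"
    and b: "b_seq n = g \<otimes>\<^bsub>F2\<^esub> inv\<^bsub>F2\<^esub> (a_seq n) \<otimes>\<^bsub>F2\<^esub> inv\<^bsub>F2\<^esub> g"
    using b_seq_conj_inv_a_seq by blast
  have a: "a_seq n \<in> carrier F2"
    using ab_seq_carrier by (simp add: a_seq_def)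
  have "b_seq n \<in> lcs m \<longleftrightarrow> a_seq n \<in> lcs m" for m
    unfolding lcs_def b using normal.conj_inv_mem_iff[OF lcs_aux_normal g a] .
  then show ?thesis
    unfolding gamma_deg_def by simp
qed

end
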